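(* Let $\Gamma=(V,E)$ be a graph and for each $v\in V$ let $M_v$ be a monoid. If every $M_v$ is right cancellative (respectively left cancellative, respectively cancellative), then the graph product $\Gamma_{v\in V}M_v$ is right cancellative (respectively left cancellative, respectively cancellative).
   Context: A graph $\Gamma=(V,E)$ consists of a set $V$ of vertices and an irreflexive symmetric relation $E\subseteq V\times V$ (edges); $u,v$ are adjacent if $(u,v)\in E$. For monoids $M_v$ ($v\in V$, taken pairwise disjoint), the graph product $\Gamma_{v\in V}M_v$ is the quotient of the free product of the $M_v$ by the congruence generated by all pairs $(mn,nm)$ with $m\in M_u$, $n\in M_v$ and $(u,v)\in E$. Equivalently, if $M_v$ has presentation $\langle A_v\mid R_v\rangle$, the graph product has presentation $\langle \bigcup_v A_v \mid \bigcup_v R_v \cup \{ab=ba : a\in A_u, b\in A_v, (u,v)\in E\}\rangle$. *)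

theory Defs
  imports "HOL-Algebra.Group"
begin

text \<open>The monoids M v are HOL-Algebra monoids;
 they are made pairwise disjoint by tagging each element with its vertex.
 Elements of the free product are words (lists) of tagged letters (v, a) with
 a in carrier (M v); the graph product is the quotient of the free monoid on
 these letters by the congruence generated by the free-product relations and
 the commutation relations for adjacent vertices.\<close>

definition gp_word :: "('v \<Rightarrow> ('a, 'b) monoid_scheme) \<Rightarrow> ('v \<times> 'a) list \<Rightarrow> bool" where
  "gp_word M w \<longleftrightarrow> (\<forall>(v, a) \<in> set w. a \<in> carrier (M v))"

inductive gp_cong :: "('v \<Rightarrow> 'v \<Rightarrow> bool) \<Rightarrow> ('v \<Rightarrow> ('a, 'b) monoid_scheme)
    \<Rightarrow> ('v \<times> 'a) list \<Rightarrow> ('v \<times> 'a) list \<Rightarrow> bool"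
  for E M where
  refl: "gp_cong E M w w"
| sym: "gp_cong E M u w \<Longrightarrow> gp_cong E M w u"
| trans: "gp_cong E M u w \<Longrightarrow> gp_cong E M w z \<Longrightarrow> gp_cong E M u z"
| compat: "gp_cong E M u w \<Longrightarrow> gp_cong E M (x @ u @ y) (x @ w @ y)"
| mult: "a \<in> carrier (M v) \<Longrightarrow> b \<in> carrier (M v) \<Longrightarrow>
         gp_cong E M [(v, a), (v, b)] [(v, a \<otimes>\<^bsub>M v\<^esub> b)]"
| one: "gp_cong E M [(v, \<one>\<^bsub>M v\<^esub>)] []"
| comm: "E u v \<Longrightarrow> a \<in> carrier (M u) \<Longrightarrow> b \<in> carrier (M v) \<Longrightarrow>
         gp_cong E M [(u, a), (v, b)] [(v, b), (u, a)]"

definition gp_rel :: "('v \<Rightarrow> 'v \<Rightarrow> bool) \<Rightarrow> ('v \<Rightarrow> ('a, 'b) monoid_scheme)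
    \<Rightarrow> (('v \<times> 'a) list \<times> ('v \<times> 'a) list) set" where
  "gp_rel E M = {(x, y). gp_word M x \<and> gp_word M y \<and> gp_cong E M x y}"

definition graph_product :: "('v \<Rightarrow> 'v \<Rightarrow> bool) \<Rightarrow> ('v \<Rightarrow> ('a, 'b) monoid_scheme)
    \<Rightarrow> ('v \<times> 'a) list set monoid" where
  "graph_product E M =
    \<lparr> carrier = {w. gp_word M w} // gp_rel E M,
      mult = (\<lambda>X Y. \<Union>x\<in>X. \<Union>y\<in>Y. gp_rel E M `` {x @ y}),
      one = gp_rel E M `` {[]} \<rparr>"

definition right_cancellative :: "('a, 'b) monoid_scheme \<Rightarrow> bool" where
  "right_cancellative G \<longleftrightarrow>
    (\<forall>a\<in>carrier G. \<forall>b\<in>carrier G. \<forall>c\<in>carrier G. a \<otimes>\<^bsub>G\<^esub> c = b \<otimes>\<^bsub>G\<^esub> c \<longrightarrow> a = b)"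

definition left_cancellative :: "('a, 'b) monoid_scheme \<Rightarrow> bool" where
  "left_cancellative G \<longleftrightarrow>
    (\<forall>a\<in>carrier G. \<forall>b\<in>carrier G. \<forall>c\<in>carrier G. c \<otimes>\<^bsub>G\<^esub> a = c \<otimes>\<^bsub>G\<^esub> b \<longrightarrow> a = b)"

definition cancellative :: "('a, 'b) monoid_scheme \<Rightarrow> bool" where
  "cancellative G \<longleftrightarrow> left_cancellative G \<and> right_cancellative G"

end

theory Submission
  imports Defs
begin

text \<open>Elements of the graph product have normal forms: reduced words (no identity letters,
  and no two letters at the same vertex that can be brought together by commuting letters at
  adjacent vertices), taken up to such commutations.  Right multiplication by a letter
  \<open>(v, m)\<close> acts on reduced words by multiplying \<open>m\<close> into the exposed \<open>v\<close>-letter (the last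
  \<open>v\<close>-letter that commutes to the end), or appending it.  This action respects the defining
  relations, so two words are congruent iff their normal forms agree.  As it only changes the
  exposed \<open>v\<close>-letter \<open>a\<close> into \<open>a m\<close>, right cancellation in \<open>M v\<close> lifts to the graph product.
  Left cancellation follows by reversing words, which replaces each \<open>M v\<close> by its opposite.\<close>

lemma filter_eq_snocD:
  assumes "filter P xs = ys @ [y]"
  shows "\<exists>us vs. xs = us @ [y] @ vs \<and> filter P vs = []"
proof -
  have "filter P (rev xs) = y # rev ys"
    using assms by (simp flip: rev_filter)
  then obtain us vs where us: "rev xs = us @ y # vs" "\<forall>u\<in>set us. \<not> P u"
    by (auto dest: filter_eq_ConsD)
  then have "rev (rev xs) = rev vs @ [y] @ rev us" by simp
  then have "xs = rev vs @ [y] @ rev us" by simp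
  moreover have "filter P (rev us) = []" using us(2) by (simp add: filter_empty_conv)
  ultimately show ?thesis by blast
qed

lemma gp_word_Nil [simp]: "gp_word M []"
  unfolding gp_word_def by simp

lemma gp_word_Cons [simp]: "gp_word M (x # w) \<longleftrightarrow> snd x \<in> carrier (M (fst x)) \<and> gp_word M w"
  unfolding gp_word_def by (cases x) auto

lemma gp_word_append [simp]: "gp_word M (u @ w) \<longleftrightarrow> gp_word M u \<and> gp_word M w"
  unfolding gp_word_def by auto

lemma gp_word_rev [simp]: "gp_word M (rev w) \<longleftrightarrow> gp_word M w"
  unfolding gp_word_def by simp

lemma gp_cong_append_left: "gp_cong E M u w \<Longrightarrow> gp_cong E M (x @ u) (x @ w)"
  using gp_cong.compat[of E M u w x "[]"] by simp

lemma gp_cong_append_right: "gp_cong E M u w \<Longrightarrow> gp_cong E M (u @ y) (w @ y)"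
  using gp_cong.compat[of E M u w "[]" y] by simp

lemma equiv_gp_rel: "equiv {w. gp_word M w} (gp_rel E M)"
  unfolding equiv_def refl_on_def sym_def trans_def gp_rel_def
  by (auto intro: gp_cong.refl gp_cong.sym gp_cong.trans)

lemma graph_product_carrierE:
  assumes "X \<in> carrier (graph_product E M)"
  obtains x where "X = gp_rel E M `` {x}" "gp_word M x"
  using assms unfolding graph_product_def by (auto elim: quotientE)

lemma graph_product_class_eq_iff:
  assumes "gp_word M x" "gp_word M y"
  shows "gp_rel E M `` {x} = gp_rel E M `` {y} \<longleftrightarrow> gp_cong E M x y"
proof -
  have "gp_rel E M `` {x} = gp_rel E M `` {y} \<longleftrightarrow> (x, y) \<in> gp_rel E M"
    using eq_equiv_class_iff[OF equiv_gp_rel] assms by blast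
  then show ?thesis using assms unfolding gp_rel_def by simp
qed

lemma graph_product_mult_class:
  assumes "gp_word M x" "gp_word M y"
  shows "gp_rel E M `` {x} \<otimes>\<^bsub>graph_product E M\<^esub> gp_rel E M `` {y} = gp_rel E M `` {x @ y}"
proof (rule equalityI; rule subsetI)
  fix z assume "z \<in> gp_rel E M `` {x} \<otimes>\<^bsub>graph_product E M\<^esub> gp_rel E M `` {y}"
  then obtain x' y' where h: "gp_cong E M x x'" "gp_cong E M y y'" "(x' @ y', z) \<in> gp_rel E M"
    unfolding graph_product_def gp_rel_def by auto
  have "gp_cong E M (x @ y) (x' @ y')"
    using gp_cong.trans[OF gp_cong_append_right[OF h(1)] gp_cong_append_left[OF h(2)]] .
  then show "z \<in> gp_rel E M `` {x @ y}"
    using h(3) assms gp_cong.trans unfolding gp_rel_def by auto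
next
  fix z assume "z \<in> gp_rel E M `` {x @ y}"
  moreover have "x \<in> gp_rel E M `` {x}" "y \<in> gp_rel E M `` {y}"
    using equiv_class_self[OF equiv_gp_rel] assms by auto
  ultimately show "z \<in> gp_rel E M `` {x} \<otimes>\<^bsub>graph_product E M\<^esub> gp_rel E M `` {y}"
    unfolding graph_product_def by auto
qed

lemma right_cancellative_graph_productI:
  assumes "\<And>x y c. gp_word M x \<Longrightarrow> gp_word M y \<Longrightarrow> gp_word M c \<Longrightarrow>
      gp_cong E M (x @ c) (y @ c) \<Longrightarrow> gp_cong E M x y"
  shows "right_cancellative (graph_product E M)"
  unfolding right_cancellative_def
proof (intro ballI impI)
  fix X Y C assume "X \<in> carrier (graph_product E M)" "Y \<in> carrier (graph_product E M)"
    "C \<in> carrier (graph_product E M)"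
  then obtain x y c where w: "gp_word M x" "gp_word M y" "gp_word M c"
    and X: "X = gp_rel E M `` {x}" and Y: "Y = gp_rel E M `` {y}" and C: "C = gp_rel E M `` {c}"
    by (metis graph_product_carrierE)
  assume "X \<otimes>\<^bsub>graph_product E M\<^esub> C = Y \<otimes>\<^bsub>graph_product E M\<^esub> C"
  then have "gp_rel E M `` {x @ c} = gp_rel E M `` {y @ c}"
    unfolding X Y C graph_product_mult_class[OF w(1,3)] graph_product_mult_class[OF w(2,3)] .
  then have "gp_cong E M (x @ c) (y @ c)"
    using w graph_product_class_eq_iff[of M "x @ c" "y @ c"] by simp
  then show "X = Y"
    using assms w graph_product_class_eq_iff unfolding X Y by blast
qed

lemma left_cancellative_graph_productI:
  assumes "\<And>x y c. gp_word M x \<Longrightarrow> gp_word M y \<Longrightarrow> gp_word M c \<Longrightarrow>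
      gp_cong E M (c @ x) (c @ y) \<Longrightarrow> gp_cong E M x y"
  shows "left_cancellative (graph_product E M)"
  unfolding left_cancellative_def
proof (intro ballI impI)
  fix X Y C assume "X \<in> carrier (graph_product E M)" "Y \<in> carrier (graph_product E M)"
    "C \<in> carrier (graph_product E M)"
  then obtain x y c where w: "gp_word M x" "gp_word M y" "gp_word M c"
    and X: "X = gp_rel E M `` {x}" and Y: "Y = gp_rel E M `` {y}" and C: "C = gp_rel E M `` {c}"
    by (metis graph_product_carrierE)
  assume "C \<otimes>\<^bsub>graph_product E M\<^esub> X = C \<otimes>\<^bsub>graph_product E M\<^esub> Y"
  then have "gp_rel E M `` {c @ x} = gp_rel E M `` {c @ y}"
    unfolding X Y C graph_product_mult_class[OF w(3,1)] graph_product_mult_class[OF w(3,2)] .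
  then have "gp_cong E M (c @ x) (c @ y)"
    using w graph_product_class_eq_iff[of M "c @ x" "c @ y"] by simp
  then show "X = Y"
    using assms w graph_product_class_eq_iff unfolding X Y by blast
qed

section \<open>Trace equivalence\<close>

definition pair_proj :: "'v \<Rightarrow> 'v \<Rightarrow> ('v \<times> 'a) list \<Rightarrow> ('v \<times> 'a) list" where
  "pair_proj z w xs = filter (\<lambda>y. fst y = z \<or> fst y = w) xs"

lemma pair_proj_append [simp]: "pair_proj z w (xs @ ys) = pair_proj z w xs @ pair_proj z w ys"
  unfolding pair_proj_def by simp

lemma pair_proj_Nil_iff: "pair_proj z w xs = [] \<longleftrightarrow> (\<forall>y\<in>set xs. fst y \<noteq> z \<and> fst y \<noteq> w)"
  unfolding pair_proj_def filter_empty_conv by blast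

locale graph_of_monoids =
  fixes E :: "'v \<Rightarrow> 'v \<Rightarrow> bool" and M :: "'v \<Rightarrow> ('a, 'b) monoid_scheme"
  assumes irrefl: "\<And>v. \<not> E v v"
    and symm: "\<And>u v. E u v \<Longrightarrow> E v u"
    and mon: "\<And>v. monoid (M v)"
begin

abbreviation gc :: "('v \<times> 'a) list \<Rightarrow> ('v \<times> 'a) list \<Rightarrow> bool" where
  "gc \<equiv> gp_cong E M"

lemma gp_cong_word_iff: "gc u w \<Longrightarrow> gp_word M u \<longleftrightarrow> gp_word M w"
  by (induction rule: gp_cong.induct) (auto simp: monoid.m_closed[OF mon] monoid.one_closed[OF mon])

text \<open>By the projection lemma of trace theory, two words are equal up to commuting adjacent
  letters iff their projections to every pair of non-adjacent vertices agree; we take the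
  latter as the definition.  The case \<open>z = w\<close> projects to a single vertex.\<close>

definition trace_eq :: "('v \<times> 'a) list \<Rightarrow> ('v \<times> 'a) list \<Rightarrow> bool" where
  "trace_eq r r' \<longleftrightarrow> (\<forall>z w. \<not> E z w \<longrightarrow> pair_proj z w r = pair_proj z w r')"

definition adjacent_to :: "('v \<times> 'a) list \<Rightarrow> 'v \<Rightarrow> bool" where
  "adjacent_to s v \<longleftrightarrow> (\<forall>y\<in>set s. E (fst y) v)"

lemma trace_eq_refl [simp]: "trace_eq r r"
  unfolding trace_eq_def by simp

lemma trace_eq_sym: "trace_eq r r' \<Longrightarrow> trace_eq r' r"
  unfolding trace_eq_def by simp

lemma trace_eq_trans: "trace_eq r r' \<Longrightarrow> trace_eq r' r'' \<Longrightarrow> trace_eq r r''"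
  unfolding trace_eq_def by simp

lemma trace_eq_append: "trace_eq a b \<Longrightarrow> trace_eq c d \<Longrightarrow> trace_eq (a @ c) (b @ d)"
  unfolding trace_eq_def by simp

lemma trace_eq_swap:
  assumes "E u v" shows "trace_eq [(u, a), (v, b)] [(v, b), (u, a)]"
  unfolding trace_eq_def pair_proj_def
proof (intro allI impI)
  fix z w assume "\<not> E z w"
  then have "\<not> ((u = z \<or> u = w) \<and> (v = z \<or> v = w))" using assms symm irrefl by metis
  then show "filter (\<lambda>y. fst y = z \<or> fst y = w) [(u, a), (v, b)]
      = filter (\<lambda>y. fst y = z \<or> fst y = w) [(v, b), (u, a)]"
    by auto
qed

lemma adjacent_to_simps [simp]:
  "adjacent_to [] v"
  "adjacent_to (x # s) v \<longleftrightarrow> E (fst x) v \<and> adjacent_to s v"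
  unfolding adjacent_to_def by auto

lemma adjacent_to_not_vertex: "adjacent_to s v \<Longrightarrow> y \<in> set s \<Longrightarrow> fst y \<noteq> v"
  unfolding adjacent_to_def using irrefl by auto

lemma pair_proj_adjacent_to:
  "adjacent_to s v \<Longrightarrow> \<not> E z w \<Longrightarrow> v = z \<or> v = w \<Longrightarrow> pair_proj z w s = []"
  unfolding adjacent_to_def pair_proj_def filter_empty_conv using symm irrefl by blast

lemma gp_cong_move_letter:
  "gp_word M s \<Longrightarrow> adjacent_to s v \<Longrightarrow> m \<in> carrier (M v) \<Longrightarrow> gc (s @ [(v, m)]) ((v, m) # s)"
proof (induction s)
  case Nil
  then show ?case by (simp add: gp_cong.refl)
next
  case (Cons y s)
  obtain u a where y: "y = (u, a)" by (cases y)
  have "gc ([y] @ s @ [(v, m)]) ([y] @ (v, m) # s)"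
    using Cons by (intro gp_cong_append_left) simp
  moreover have "gc ([(u, a), (v, m)] @ s) ([(v, m), (u, a)] @ s)"
    using Cons.prems y by (intro gp_cong_append_right gp_cong.comm) auto
  ultimately show ?case using gp_cong.trans y by fastforce
qed

text \<open>The last letter at vertex \<open>v\<close> is determined by the trace, and it stays followed
  only by neighbours of \<open>v\<close>: look at the projections to \<open>{v}\<close> and to \<open>{z, v}\<close>.\<close>

lemma trace_eq_exposed_letter:
  assumes eq: "trace_eq (p @ [(v, a)] @ s) r'" and s: "adjacent_to s v"
  obtains p' s' where "r' = p' @ [(v, a)] @ s'" "adjacent_to s' v"
proof -
  have "pair_proj v v s = []" using pair_proj_adjacent_to s irrefl by blast
  moreover have "pair_proj v v (p @ [(v, a)] @ s) = pair_proj v v r'"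
    using eq irrefl unfolding trace_eq_def by blast
  ultimately have "filter (\<lambda>y. fst y = v \<or> fst y = v) r' = pair_proj v v p @ [(v, a)]"
    by (simp add: pair_proj_def)
  then obtain p' s' where r': "r' = p' @ [(v, a)] @ s'" and "pair_proj v v s' = []"
    unfolding pair_proj_def by (blast dest: filter_eq_snocD)
  then have s'v: "fst y \<noteq> v" if "y \<in> set s'" for y
    using that by (simp add: pair_proj_Nil_iff)
  have "E (fst y) v" if y: "y \<in> set s'" for y
  proof (rule ccontr)
    assume ne: "\<not> E (fst y) v"
    let ?q = "pair_proj (fst y) v"
    have "?q s = []" using pair_proj_adjacent_to s ne by blast
    moreover have "?q (p @ [(v, a)] @ s) = ?q r'" using eq ne unfolding trace_eq_def by blast
    ultimately have "?q p @ [(v, a)] = ?q p' @ [(v, a)] @ ?q s'"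
      using r' by (simp add: pair_proj_def)
    moreover have "?q s' \<noteq> []" using y by (auto simp: pair_proj_Nil_iff)
    ultimately have "last (?q s') = (v, a)"
      by (metis append_assoc last_appendR last_snoc)
    moreover have "last (?q s') \<in> set s'"
      using \<open>?q s' \<noteq> []\<close> last_in_set by (force simp: pair_proj_def)
    ultimately show False using s'v by fastforce
  qed
  then show thesis using that r' unfolding adjacent_to_def by blast
qed

lemma trace_eq_remove_exposed_iff:
  assumes "adjacent_to s v" "adjacent_to s' v"
  shows "trace_eq (p @ [(v, a)] @ s) (p' @ [(v, a)] @ s') \<longleftrightarrow> trace_eq (p @ s) (p' @ s')"
proof -
  have "pair_proj z w (p @ [(v, a)] @ s) = pair_proj z w (p' @ [(v, a)] @ s')
      \<longleftrightarrow> pair_proj z w (p @ s) = pair_proj z w (p' @ s')" if "\<not> E z w" for z w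
  proof (cases "v = z \<or> v = w")
    case True
    then have "pair_proj z w s = []" "pair_proj z w s' = []"
      using pair_proj_adjacent_to assms that by blast+
    then show ?thesis using True by (simp add: pair_proj_def)
  next
    case False
    then show ?thesis by (simp add: pair_proj_def)
  qed
  then show ?thesis unfolding trace_eq_def by blast
qed

lemma trace_eq_imp_gp_cong: "gp_word M r \<Longrightarrow> gp_word M r' \<Longrightarrow> trace_eq r r' \<Longrightarrow> gc r r'"
proof (induction r arbitrary: r' rule: rev_induct)
  case Nil
  have "pair_proj z z [] = pair_proj z z r'" for z
    using Nil.prems(3) irrefl unfolding trace_eq_def by blast
  then have "pair_proj z z r' = []" for z by (simp add: pair_proj_def)
  then have "r' = []" using pair_proj_Nil_iff by (metis list.set_intros(1) neq_Nil_conv)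
  then show ?case by (simp add: gp_cong.refl)
next
  case (snoc x q)
  obtain v a where x: "x = (v, a)" by (cases x)
  then have "trace_eq (q @ [(v, a)] @ []) r'" using snoc.prems by simp
  then obtain p' s' where r': "r' = p' @ [(v, a)] @ s'" and s': "adjacent_to s' v"
    by (rule trace_eq_exposed_letter) simp
  have "trace_eq (q @ []) (p' @ s')"
    using trace_eq_remove_exposed_iff[of "[]" v s' q a p'] s' snoc.prems x r' by simp
  then have "gc q (p' @ s')" using snoc r' by simp
  then have "gc (q @ [(v, a)]) (p' @ s' @ [(v, a)])" using gp_cong_append_right by fastforce
  moreover have "gc (p' @ s' @ [(v, a)]) (p' @ (v, a) # s')"
    using gp_cong_move_letter s' snoc.prems r' x by (intro gp_cong_append_left) simp
  ultimately show ?case using gp_cong.trans r' x by fastforce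
qed

section \<open>Exposed letters\<close>

fun split_last :: "'v \<Rightarrow> ('v \<times> 'a) list \<Rightarrow> (('v \<times> 'a) list \<times> 'a \<times> ('v \<times> 'a) list) option" where
  "split_last v [] = None"
| "split_last v (x # xs) =
    (case split_last v xs of
      Some (p, a, s) \<Rightarrow> Some (x # p, a, s)
    | None \<Rightarrow> (if fst x = v \<and> adjacent_to xs v then Some ([], snd x, xs) else None))"

lemma split_last_SomeD: "split_last v r = Some (p, a, s) \<Longrightarrow> r = p @ [(v, a)] @ s \<and> adjacent_to s v"
proof (induction r arbitrary: p a s)
  case (Cons x xs)
  then show ?case by (cases x) (auto split: option.splits if_splits)
qed simp

lemma split_last_no_vertex: "\<forall>y\<in>set s. fst y \<noteq> v \<Longrightarrow> split_last v s = None"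
  by (induction s) auto

lemma split_last_eq: "adjacent_to s v \<Longrightarrow> split_last v (p @ (v, c) # s) = Some (p, c, s)"
proof (induction p)
  case Nil
  then show ?case using split_last_no_vertex adjacent_to_not_vertex by simp
qed simp

lemma trace_eq_split_last:
  assumes "trace_eq r r'" "split_last v r = Some (p, a, s)"
  obtains p' s' where "split_last v r' = Some (p', a, s')"
proof -
  from assms(2) have r: "r = p @ [(v, a)] @ s" and s: "adjacent_to s v"
    by (auto dest: split_last_SomeD)
  obtain p' s' where "r' = p' @ [(v, a)] @ s'" "adjacent_to s' v"
    using trace_eq_exposed_letter[OF assms(1)[unfolded r] s] by blast
  then show thesis using that split_last_eq by simp
qed

lemma trace_eq_split_last_None: "trace_eq r r' \<Longrightarrow> split_last v r = None \<Longrightarrow> split_last v r' = None"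
  by (metis not_None_eq prod_cases3 trace_eq_split_last trace_eq_sym)

definition exposed :: "'v \<Rightarrow> 'v list \<Rightarrow> bool" where
  "exposed v vs \<longleftrightarrow> (\<exists>p s. vs = p @ [v] @ s \<and> (\<forall>z\<in>set s. E z v))"

lemma split_last_None_iff: "split_last v r = None \<longleftrightarrow> \<not> exposed v (map fst r)"
proof -
  have "split_last v r \<noteq> None" if ex: "exposed v (map fst r)"
  proof -
    obtain p s where ps: "map fst r = p @ [v] @ s" "\<forall>z\<in>set s. E z v"
      using ex unfolding exposed_def by blast
    then obtain r1 c r2 where "r = r1 @ [(v, c)] @ r2" "map fst r2 = s"
      by (fastforce simp: map_eq_append_conv)
    moreover have "adjacent_to r2 v"
      using ps(2) \<open>map fst r2 = s\<close> unfolding adjacent_to_def by force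
    ultimately show ?thesis using split_last_eq by simp
  qed
  moreover have "exposed v (map fst r)" if "split_last v r = Some (p, a, s)" for p a s
  proof -
    have "r = p @ [(v, a)] @ s" "adjacent_to s v" using that by (auto dest: split_last_SomeD)
    then show ?thesis
      unfolding exposed_def adjacent_to_def
      by (intro exI[of _ "map fst p"] exI[of _ "map fst s"]) auto
  qed
  ultimately show ?thesis by (cases "split_last v r") auto
qed

lemma exposed_iff_dropWhile:
  "exposed v vs \<longleftrightarrow> (\<exists>zs. dropWhile (\<lambda>z. E z v) (rev vs) = v # zs)"
proof
  assume "exposed v vs"
  then obtain p s where "vs = p @ [v] @ s" "\<forall>z\<in>set s. E z v" unfolding exposed_def by blast
  then show "\<exists>zs. dropWhile (\<lambda>z. E z v) (rev vs) = v # zs"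
    using irrefl by (simp add: dropWhile_append)
next
  assume "\<exists>zs. dropWhile (\<lambda>z. E z v) (rev vs) = v # zs"
  then obtain zs where zs: "dropWhile (\<lambda>z. E z v) (rev vs) = v # zs" by blast
  let ?t = "takeWhile (\<lambda>z. E z v) (rev vs)"
  have "rev vs = ?t @ v # zs" using takeWhile_dropWhile_id[of _ "rev vs"] zs by metis
  then have "vs = rev (?t @ v # zs)" by (metis rev_rev_ident)
  then have "vs = rev zs @ [v] @ rev ?t" by simp
  moreover have "\<forall>z\<in>set (rev ?t). E z v" by (auto dest: set_takeWhileD)
  ultimately show "exposed v vs" unfolding exposed_def by blast
qed

lemma exposed_append_adjacent: "\<forall>z\<in>set S. E z v \<Longrightarrow> exposed v (P @ S) \<longleftrightarrow> exposed v P"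
  by (simp add: exposed_iff_dropWhile dropWhile_append)

lemma exposed_insert_adjacent:
  assumes "E w v" shows "exposed v (P @ [w] @ S) \<longleftrightarrow> exposed v (P @ S)"
proof (cases "\<forall>z\<in>set S. E z v")
  case True
  then show ?thesis using assms by (simp add: exposed_iff_dropWhile dropWhile_append)
next
  case False
  then obtain y ys where "dropWhile (\<lambda>z. E z v) (rev S) = y # ys"
    by (metis dropWhile_eq_Nil_conv neq_Nil_conv set_rev)
  then show ?thesis using False assms by (auto simp: exposed_iff_dropWhile dropWhile_append)
qed

text \<open>No two occurrences of a vertex can be brought next to each other by commuting
  adjacent letters.\<close>

definition vertex_reduced :: "'v list \<Rightarrow> bool" where
  "vertex_reduced vs \<longleftrightarrow> (\<forall>p v s. vs = p @ [v] @ s \<longrightarrow> \<not> exposed v p)"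

lemma vertex_reduced_Nil [simp]: "vertex_reduced []"
  unfolding vertex_reduced_def by simp

lemma vertex_reduced_snoc_iff: "vertex_reduced (vs @ [u]) \<longleftrightarrow> vertex_reduced vs \<and> \<not> exposed u vs"
proof
  assume red: "vertex_reduced (vs @ [u])"
  have "\<not> exposed v p" if "vs = p @ [v] @ s" for p v s
    using red that unfolding vertex_reduced_def by (metis append.assoc)
  moreover have "\<not> exposed u vs" using red unfolding vertex_reduced_def by force
  ultimately show "vertex_reduced vs \<and> \<not> exposed u vs" unfolding vertex_reduced_def by blast
next
  assume red: "vertex_reduced vs \<and> \<not> exposed u vs"
  show "vertex_reduced (vs @ [u])" unfolding vertex_reduced_def
  proof (intro allI impI)
    fix p v s assume eq: "vs @ [u] = p @ [v] @ s"
    show "\<not> exposed v p"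
    proof (cases s rule: rev_exhaust)
      case Nil
      then show ?thesis using eq red by simp
    next
      case (snoc s' x)
      then have "vs = p @ [v] @ s'" using eq by simp
      then show ?thesis using red unfolding vertex_reduced_def by blast
    qed
  qed
qed

lemma vertex_reduced_remove_adjacent:
  "vertex_reduced (P @ [u] @ S) \<Longrightarrow> \<forall>z\<in>set S. E z u \<Longrightarrow> vertex_reduced (P @ S)"
proof (induction S rule: rev_induct)
  case Nil
  then show ?case using vertex_reduced_snoc_iff by simp
next
  case (snoc x S)
  then have "vertex_reduced (P @ [u] @ S)" "\<not> exposed x (P @ [u] @ S)" "E u x"
    using vertex_reduced_snoc_iff[of "P @ [u] @ S" x] symm by auto
  then show ?case
    using snoc exposed_insert_adjacent vertex_reduced_snoc_iff[of "P @ S" x] by simp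
qed

lemma vertex_reduced_split_last:
  assumes "vertex_reduced (map fst r)" "split_last v r = Some (p, c, s)"
  shows "split_last v (p @ s) = None"
proof -
  from assms(2) have r: "r = p @ [(v, c)] @ s" and s: "adjacent_to s v"
    by (auto dest: split_last_SomeD)
  then have "\<not> exposed v (map fst p)" using assms(1) unfolding vertex_reduced_def by simp
  moreover have "\<forall>z\<in>set (map fst s). E z v" using s unfolding adjacent_to_def by simp
  ultimately show ?thesis using exposed_append_adjacent split_last_None_iff by simp
qed

section \<open>Reduced words and right multiplication by a letter\<close>

definition no_ones :: "('v \<times> 'a) list \<Rightarrow> bool" where
  "no_ones r \<longleftrightarrow> (\<forall>y\<in>set r. snd y \<noteq> \<one>\<^bsub>M (fst y)\<^esub>)"

definition reduced :: "('v \<times> 'a) list \<Rightarrow> bool" where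
  "reduced r \<longleftrightarrow> gp_word M r \<and> no_ones r \<and> vertex_reduced (map fst r)"

lemma reduced_Nil [simp]: "reduced []"
  unfolding reduced_def no_ones_def by simp

lemma reduced_split_last:
  assumes "reduced r" "split_last v r = Some (p, a, s)"
  shows "a \<in> carrier (M v)" "a \<noteq> \<one>\<^bsub>M v\<^esub>"
  using assms split_last_SomeD[OF assms(2)] unfolding reduced_def no_ones_def by auto

definition rmul :: "('v \<times> 'a) list \<Rightarrow> 'v \<times> 'a \<Rightarrow> ('v \<times> 'a) list" where
  "rmul r l = (case l of (v, m) \<Rightarrow>
    (case split_last v r of
      Some (p, a, s) \<Rightarrow>
        (if a \<otimes>\<^bsub>M v\<^esub> m = \<one>\<^bsub>M v\<^esub> then p @ s else p @ [(v, a \<otimes>\<^bsub>M v\<^esub> m)] @ s)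
    | None \<Rightarrow> (if m = \<one>\<^bsub>M v\<^esub> then r else r @ [(v, m)])))"

lemma rmul_Some:
  "split_last v r = Some (p, a, s) \<Longrightarrow>
    rmul r (v, m) = (if a \<otimes>\<^bsub>M v\<^esub> m = \<one>\<^bsub>M v\<^esub> then p @ s else p @ [(v, a \<otimes>\<^bsub>M v\<^esub> m)] @ s)"
  unfolding rmul_def by simp

lemma rmul_None: "split_last v r = None \<Longrightarrow> rmul r (v, m) = (if m = \<one>\<^bsub>M v\<^esub> then r else r @ [(v, m)])"
  unfolding rmul_def by simp

lemma reduced_rmul:
  assumes "reduced r" "m \<in> carrier (M v)"
  shows "reduced (rmul r (v, m))"
proof (cases "split_last v r")
  case None
  then have "vertex_reduced (map fst r @ [v])"
    using assms(1) split_last_None_iff vertex_reduced_snoc_iff unfolding reduced_def by simp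
  then show ?thesis using assms unfolding rmul_None[OF None] reduced_def no_ones_def by auto
next
  case (Some t)
  then obtain p a s where S: "split_last v r = Some (p, a, s)" by (cases t) auto
  then have r: "r = p @ [(v, a)] @ s" "adjacent_to s v" by (auto dest: split_last_SomeD)
  have "vertex_reduced (map fst p @ [v] @ map fst s)" using assms r unfolding reduced_def by simp
  then have "vertex_reduced (map fst p @ map fst s)"
    using r(2) vertex_reduced_remove_adjacent unfolding adjacent_to_def by simp
  moreover have "a \<otimes>\<^bsub>M v\<^esub> m \<in> carrier (M v)"
    using reduced_split_last[OF assms(1) S] assms(2) monoid.m_closed[OF mon] by blast
  ultimately show ?thesis using assms r unfolding rmul_Some[OF S] reduced_def no_ones_def by auto
qed

lemma gp_cong_rmul:
  assumes "gp_word M r" "m \<in> carrier (M v)"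
  shows "gc (r @ [(v, m)]) (rmul r (v, m))"
proof (cases "split_last v r")
  case None
  have "gc (r @ [(v, \<one>\<^bsub>M v\<^esub>)]) (r @ [])" by (intro gp_cong_append_left gp_cong.one)
  then show ?thesis unfolding rmul_None[OF None] by (auto intro: gp_cong.refl)
next
  case (Some t)
  then obtain p a s where S: "split_last v r = Some (p, a, s)" by (cases t) auto
  then have r: "r = p @ [(v, a)] @ s" "adjacent_to s v" by (auto dest: split_last_SomeD)
  have a: "a \<in> carrier (M v)" using assms r by simp
  have "gc (s @ [(v, m)]) ((v, m) # s)" using gp_cong_move_letter assms r by simp
  then have "gc ((p @ [(v, a)]) @ s @ [(v, m)]) ((p @ [(v, a)]) @ (v, m) # s)"
    by (rule gp_cong_append_left)
  then have "gc (r @ [(v, m)]) (p @ [(v, a)] @ [(v, m)] @ s)" using r by simp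
  moreover have "gc (p @ [(v, a), (v, m)] @ s) (p @ [(v, a \<otimes>\<^bsub>M v\<^esub> m)] @ s)"
    using a assms(2) by (intro gp_cong.compat gp_cong.mult)
  ultimately have prod: "gc (r @ [(v, m)]) (p @ [(v, a \<otimes>\<^bsub>M v\<^esub> m)] @ s)"
    using gp_cong.trans by fastforce
  show ?thesis
  proof (cases "a \<otimes>\<^bsub>M v\<^esub> m = \<one>\<^bsub>M v\<^esub>")
    case True
    have "gc (p @ [(v, \<one>\<^bsub>M v\<^esub>)] @ s) (p @ [] @ s)" by (intro gp_cong.compat gp_cong.one)
    then show ?thesis using gp_cong.trans[OF prod] True unfolding rmul_Some[OF S] by simp
  next
    case False
    then show ?thesis using prod unfolding rmul_Some[OF S] by simp
  qed
qed

text \<open>A reduced word is determined up to trace equivalence by its exposed \<open>v\<close>-letter (the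
  identity if there is none) and the rest of the word.\<close>

definition exposed_letter :: "'v \<Rightarrow> ('v \<times> 'a) list \<Rightarrow> 'a" where
  "exposed_letter v r = (case split_last v r of None \<Rightarrow> \<one>\<^bsub>M v\<^esub> | Some (p, a, s) \<Rightarrow> a)"

definition exposed_rest :: "'v \<Rightarrow> ('v \<times> 'a) list \<Rightarrow> ('v \<times> 'a) list" where
  "exposed_rest v r = (case split_last v r of None \<Rightarrow> r | Some (p, a, s) \<Rightarrow> p @ s)"

lemma exposed_letter_closed: "reduced r \<Longrightarrow> exposed_letter v r \<in> carrier (M v)"
  unfolding exposed_letter_def
  using reduced_split_last monoid.one_closed[OF mon] by (auto split: option.split)

lemma rmul_exposed:
  assumes "reduced r" "m \<in> carrier (M v)"
  shows "exposed_letter v (rmul r (v, m)) = exposed_letter v r \<otimes>\<^bsub>M v\<^esub> m"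
    and "exposed_rest v (rmul r (v, m)) = exposed_rest v r"
proof -
  have "exposed_letter v (rmul r (v, m)) = exposed_letter v r \<otimes>\<^bsub>M v\<^esub> m
      \<and> exposed_rest v (rmul r (v, m)) = exposed_rest v r"
  proof (cases "split_last v r")
    case None
    have "split_last v (r @ [(v, m)]) = Some (r, m, [])" using split_last_eq[of "[]" v r m] by simp
    then show ?thesis using None assms(2) monoid.l_one[OF mon]
      unfolding rmul_None[OF None] exposed_letter_def exposed_rest_def by auto
  next
    case (Some t)
    then obtain p a s where S: "split_last v r = Some (p, a, s)" by (cases t) auto
    then have "adjacent_to s v" by (auto dest: split_last_SomeD)
    then have "split_last v (p @ [(v, a \<otimes>\<^bsub>M v\<^esub> m)] @ s) = Some (p, a \<otimes>\<^bsub>M v\<^esub> m, s)"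
      by (simp add: split_last_eq)
    moreover have "split_last v (p @ s) = None"
      using vertex_reduced_split_last assms(1) S unfolding reduced_def by blast
    ultimately show ?thesis using S
      unfolding rmul_Some[OF S] exposed_letter_def exposed_rest_def by auto
  qed
  then show "exposed_letter v (rmul r (v, m)) = exposed_letter v r \<otimes>\<^bsub>M v\<^esub> m"
    and "exposed_rest v (rmul r (v, m)) = exposed_rest v r" by simp_all
qed

lemma reduced_trace_eq_iff:
  assumes "reduced r" "reduced r'"
  shows "trace_eq r r' \<longleftrightarrow>
    exposed_letter v r = exposed_letter v r' \<and> trace_eq (exposed_rest v r) (exposed_rest v r')"
proof -
  have unexposed: "\<not> trace_eq r r' \<and> exposed_letter v r \<noteq> exposed_letter v r'"
    if "reduced r" "reduced r'" "split_last v r = None" "split_last v r' = Some (p', a', s')"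
    for r r' p' a' s'
    using that trace_eq_split_last_None[of r r' v] reduced_split_last[OF that(2,4)]
    unfolding exposed_letter_def by auto
  show ?thesis
  proof (cases "split_last v r")
    case None
    show ?thesis
    proof (cases "split_last v r'")
      case None': None
      then show ?thesis using None unfolding exposed_letter_def exposed_rest_def by simp
    next
      case (Some t)
      then show ?thesis using unexposed[OF assms None] by (cases t) auto
    qed
  next
    case (Some t)
    then obtain p a s where S: "split_last v r = Some (p, a, s)" by (cases t) auto
    then have r: "r = p @ [(v, a)] @ s" "adjacent_to s v" by (auto dest: split_last_SomeD)
    show ?thesis
    proof (cases "split_last v r'")
      case None
      then show ?thesis using unexposed[OF assms(2,1) None S] trace_eq_sym by metis
    next
      case (Some t')
      then obtain p' a' s' where S': "split_last v r' = Some (p', a', s')" by (cases t') auto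
      then have r': "r' = p' @ [(v, a')] @ s'" "adjacent_to s' v" by (auto dest: split_last_SomeD)
      have "a = a'" if "trace_eq r r'"
        using trace_eq_split_last[OF that S] S' by auto
      moreover have "exposed_letter v r = a" "exposed_letter v r' = a'"
        "exposed_rest v r = p @ s" "exposed_rest v r' = p' @ s'"
        using S S' unfolding exposed_letter_def exposed_rest_def by simp_all
      ultimately show ?thesis
        using trace_eq_remove_exposed_iff[OF r(2) r'(2), of p a p'] r r' by auto
    qed
  qed
qed

lemma rmul_trace_eq:
  assumes "reduced r" "reduced r'" "trace_eq r r'" "m \<in> carrier (M v)"
  shows "trace_eq (rmul r (v, m)) (rmul r' (v, m))"
  using assms reduced_trace_eq_iff[OF assms(1,2), where v = v]
  by (simp add: reduced_trace_eq_iff[of "rmul r (v, m)" _ v] reduced_rmul rmul_exposed)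

lemma rmul_one:
  assumes "reduced r"
  shows "trace_eq (rmul r (v, \<one>\<^bsub>M v\<^esub>)) r"
  using assms monoid.one_closed[OF mon] exposed_letter_closed[OF assms]
  by (simp add: reduced_trace_eq_iff[of _ r v] reduced_rmul rmul_exposed monoid.r_one[OF mon])

lemma rmul_mult:
  assumes "reduced r" "a \<in> carrier (M v)" "b \<in> carrier (M v)"
  shows "trace_eq (rmul (rmul r (v, a)) (v, b)) (rmul r (v, a \<otimes>\<^bsub>M v\<^esub> b))"
  using assms monoid.m_closed[OF mon] exposed_letter_closed[OF assms(1)]
  by (simp add: reduced_trace_eq_iff[of _ _ v] reduced_rmul rmul_exposed monoid.m_assoc[OF mon])

lemma rmul_right_cancel:
  assumes "right_cancellative (M v)" "reduced r" "reduced r'" "m \<in> carrier (M v)"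
    and "trace_eq (rmul r (v, m)) (rmul r' (v, m))"
  shows "trace_eq r r'"
proof -
  have "exposed_letter v r \<otimes>\<^bsub>M v\<^esub> m = exposed_letter v r' \<otimes>\<^bsub>M v\<^esub> m"
    and rest: "trace_eq (exposed_rest v r) (exposed_rest v r')"
    using assms by (simp_all add: reduced_trace_eq_iff[of _ _ v] reduced_rmul rmul_exposed)
  then have "exposed_letter v r = exposed_letter v r'"
    using assms(1,4) exposed_letter_closed[OF assms(2)] exposed_letter_closed[OF assms(3)]
    unfolding right_cancellative_def by blast
  then show ?thesis using rest reduced_trace_eq_iff[OF assms(2,3)] by blast
qed

section \<open>Commuting letters at adjacent vertices\<close>

lemma exposed_rmul_adjacent:
  assumes "E u v"
  shows "exposed v (map fst (rmul r (u, a))) \<longleftrightarrow> exposed v (map fst r)"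
proof (cases "split_last u r")
  case None
  have "exposed v (map fst r @ [u] @ []) \<longleftrightarrow> exposed v (map fst r @ [])"
    by (rule exposed_insert_adjacent[OF assms])
  then show ?thesis unfolding rmul_None[OF None] by simp
next
  case (Some t)
  then obtain p c s where S: "split_last u r = Some (p, c, s)" by (cases t) auto
  then have "r = p @ [(u, c)] @ s" by (auto dest: split_last_SomeD)
  moreover have "exposed v (map fst p @ [u] @ map fst s) \<longleftrightarrow> exposed v (map fst p @ map fst s)"
    by (rule exposed_insert_adjacent[OF assms])
  ultimately show ?thesis unfolding rmul_Some[OF S] by simp
qed

lemma split_last_rmul_adjacent_None:
  "E u v \<Longrightarrow> split_last v (rmul r (u, a)) = None \<longleftrightarrow> split_last v r = None"
  using exposed_rmul_adjacent split_last_None_iff by simp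

lemma split_last_snoc_adjacent:
  assumes "E w u"
  shows "split_last u (r @ [(w, b)])
    = map_option (\<lambda>(p, c, s). (p, c, s @ [(w, b)])) (split_last u r)"
proof (cases "split_last u r")
  case None
  then have "\<not> exposed u (map fst r @ [w])"
    using split_last_None_iff exposed_append_adjacent[of "[w]" u "map fst r"] assms by simp
  then show ?thesis using None split_last_None_iff[of u "r @ [(w, b)]"] by simp
next
  case (Some t)
  then obtain p c s where S: "split_last u r = Some (p, c, s)" by (cases t) auto
  then have "r @ [(w, b)] = p @ [(u, c)] @ (s @ [(w, b)])" "adjacent_to (s @ [(w, b)]) u"
    using assms split_last_SomeD[OF S] by (auto simp: adjacent_to_def)
  then show ?thesis using S split_last_eq by simp
qed

lemma rmul_comm_unexposed:
  assumes "E u v" "split_last v r = None"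
  shows "trace_eq (rmul (rmul r (u, a)) (v, b)) (rmul (rmul r (v, b)) (u, a))"
proof (cases "b = \<one>\<^bsub>M v\<^esub>")
  case True
  have "split_last v (rmul r (u, a)) = None" using split_last_rmul_adjacent_None assms by blast
  then show ?thesis using True assms(2) by (simp add: rmul_None)
next
  case False
  have vu: "E v u" using symm assms by blast
  have ua_v: "rmul (rmul r (u, a)) (v, b) = rmul r (u, a) @ [(v, b)]"
    using split_last_rmul_adjacent_None[OF assms(1)] assms(2) False by (simp add: rmul_None)
  have vb_u: "rmul (rmul r (v, b)) (u, a) = rmul (r @ [(v, b)]) (u, a)"
    using assms(2) False by (simp add: rmul_None)
  show ?thesis
  proof (cases "split_last u r")
    case None
    then have "split_last u (r @ [(v, b)]) = None" using split_last_snoc_adjacent[OF vu] by simp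
    moreover have "trace_eq (r @ [(u, a), (v, b)]) (r @ [(v, b), (u, a)])"
      using trace_eq_append[OF trace_eq_refl trace_eq_swap[OF assms(1)]] .
    ultimately show ?thesis using ua_v vb_u None by (simp add: rmul_None)
  next
    case (Some t)
    then obtain p c s where S: "split_last u r = Some (p, c, s)" by (cases t) auto
    then have "split_last u (r @ [(v, b)]) = Some (p, c, s @ [(v, b)])"
      using split_last_snoc_adjacent[OF vu] by simp
    then show ?thesis using ua_v vb_u rmul_Some[OF S] by (simp add: rmul_Some)
  qed
qed

lemma rmul_comm_exposed:
  assumes "E u v" "r = A @ [(u, c)] @ B @ [(v, d)] @ C"
    and "adjacent_to (B @ [(v, d)] @ C) u" "adjacent_to C v"
  shows "rmul (rmul r (u, a)) (v, b) = rmul (rmul r (v, b)) (u, a)"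
proof -
  define X where "X = (if c \<otimes>\<^bsub>M u\<^esub> a = \<one>\<^bsub>M u\<^esub> then [] else [(u, c \<otimes>\<^bsub>M u\<^esub> a)])"
  define Y where "Y = (if d \<otimes>\<^bsub>M v\<^esub> b = \<one>\<^bsub>M v\<^esub> then [] else [(v, d \<otimes>\<^bsub>M v\<^esub> b)])"
  have Su: "split_last u r = Some (A, c, B @ [(v, d)] @ C)"
    using assms split_last_eq by simp
  have Sv: "split_last v r = Some (A @ [(u, c)] @ B, d, C)"
    using assms split_last_eq[of C v "A @ [(u, c)] @ B" d] by simp
  have ua: "rmul r (u, a) = A @ X @ B @ [(v, d)] @ C" unfolding rmul_Some[OF Su] X_def by simp
  have "split_last v (A @ X @ B @ [(v, d)] @ C) = Some (A @ X @ B, d, C)"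
    using assms split_last_eq[of C v "A @ X @ B" d] by simp
  then have ua_vb: "rmul (rmul r (u, a)) (v, b) = A @ X @ B @ Y @ C"
    unfolding ua Y_def by (simp add: rmul_Some)
  have vb: "rmul r (v, b) = A @ [(u, c)] @ B @ Y @ C" unfolding rmul_Some[OF Sv] Y_def by simp
  have "adjacent_to (B @ Y @ C) u" using assms(1,3) symm unfolding adjacent_to_def Y_def by auto
  then have "split_last u (A @ [(u, c)] @ B @ Y @ C) = Some (A, c, B @ Y @ C)"
    using split_last_eq by simp
  then have "rmul (rmul r (v, b)) (u, a) = A @ X @ B @ Y @ C"
    unfolding vb X_def by (simp add: rmul_Some)
  then show ?thesis using ua_vb by simp
qed

lemma rmul_comm:
  assumes "E u v"
  shows "trace_eq (rmul (rmul r (u, a)) (v, b)) (rmul (rmul r (v, b)) (u, a))"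
proof (cases "split_last v r")
  case None
  then show ?thesis using rmul_comm_unexposed assms by blast
next
  case (Some t)
  then obtain p' d s' where Sv: "split_last v r = Some (p', d, s')" by (cases t) auto
  have vu: "E v u" using symm assms by blast
  show ?thesis
  proof (cases "split_last u r")
    case None
    then show ?thesis using rmul_comm_unexposed[OF vu] trace_eq_sym by blast
  next
    case (Some t')
    then obtain p c s where Su: "split_last u r = Some (p, c, s)" by (cases t') auto
    have r: "r = p @ [(u, c)] @ s" "adjacent_to s u" using split_last_SomeD Su by auto
    have r': "r = p' @ [(v, d)] @ s'" "adjacent_to s' v" using split_last_SomeD Sv by auto
    have "u \<noteq> v" using assms irrefl by blast
    from r(1) r'(1) have "p @ (u, c) # s = p' @ (v, d) # s'" by simp
    then obtain us where "p = p' @ us \<and> us @ (u, c) # s = (v, d) # s'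
        \<or> p @ us = p' \<and> (u, c) # s = us @ (v, d) # s'"
      by (auto simp: append_eq_append_conv2)
    then consider us' where "p = p' @ (v, d) # us'" "s' = us' @ [(u, c)] @ s"
      | us' where "p' = p @ (u, c) # us'" "s = us' @ [(v, d)] @ s'"
      using \<open>u \<noteq> v\<close> by (cases us) auto
    then show ?thesis
    proof cases
      case (1 us')
      then have "rmul (rmul r (v, b)) (u, a) = rmul (rmul r (u, a)) (v, b)"
        using rmul_comm_exposed[OF vu, of r p' d us' c s] r r' by simp
      then show ?thesis by simp
    next
      case (2 us')
      then show ?thesis using rmul_comm_exposed[OF assms, of r p c us' d s'] r r' by simp
    qed
  qed
qed

section \<open>Normal forms and cancellation\<close>

definition rmul_word :: "('v \<times> 'a) list \<Rightarrow> ('v \<times> 'a) list \<Rightarrow> ('v \<times> 'a) list" where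
  "rmul_word r w = fold (\<lambda>l r. rmul r l) w r"

lemma rmul_word_Nil [simp]: "rmul_word r [] = r"
  unfolding rmul_word_def by simp

lemma rmul_word_Cons [simp]: "rmul_word r (x # w) = rmul_word (rmul r x) w"
  unfolding rmul_word_def by simp

lemma rmul_word_append [simp]: "rmul_word r (u @ w) = rmul_word (rmul_word r u) w"
  unfolding rmul_word_def by simp

lemma reduced_rmul_word: "reduced r \<Longrightarrow> gp_word M w \<Longrightarrow> reduced (rmul_word r w)"
proof (induction w arbitrary: r)
  case (Cons x w)
  then show ?case using reduced_rmul by (cases x) simp
qed simp

lemma gp_cong_rmul_word: "reduced r \<Longrightarrow> gp_word M w \<Longrightarrow> gc (r @ w) (rmul_word r w)"
proof (induction w arbitrary: r)
  case Nil
  then show ?case by (simp add: gp_cong.refl)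
next
  case (Cons x w)
  obtain v m where x: "x = (v, m)" and m: "m \<in> carrier (M v)"
    using Cons.prems by (cases x) simp
  have "gc (r @ [(v, m)]) (rmul r (v, m))"
    using gp_cong_rmul Cons.prems m unfolding reduced_def by blast
  then have "gc (r @ [(v, m)] @ w) (rmul r (v, m) @ w)" using gp_cong_append_right by fastforce
  moreover have "gc (rmul r (v, m) @ w) (rmul_word (rmul r (v, m)) w)"
    using Cons reduced_rmul m by simp
  ultimately show ?case using gp_cong.trans x by fastforce
qed

lemma rmul_word_trace_eq:
  "reduced q \<Longrightarrow> reduced q' \<Longrightarrow> trace_eq q q' \<Longrightarrow> gp_word M w \<Longrightarrow>
    trace_eq (rmul_word q w) (rmul_word q' w)"
proof (induction w arbitrary: q q')
  case (Cons x w)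
  then show ?case using rmul_trace_eq reduced_rmul by (cases x) simp
qed simp

lemma gp_cong_imp_trace_eq_rmul_word:
  "gc u w \<Longrightarrow> gp_word M u \<Longrightarrow> reduced r \<Longrightarrow> trace_eq (rmul_word r u) (rmul_word r w)"
proof (induction arbitrary: r rule: gp_cong.induct)
  case (refl w)
  then show ?case by simp
next
  case (sym u w)
  then have "gp_word M u" using gp_cong_word_iff by blast
  then show ?case using sym trace_eq_sym by blast
next
  case (trans u w z)
  then have "gp_word M w" using gp_cong_word_iff by blast
  then show ?case using trans trace_eq_trans by blast
next
  case (compat u w x y)
  let ?q = "rmul_word r x"
  have q: "reduced ?q" and uy: "gp_word M u" "gp_word M y"
    using compat.prems reduced_rmul_word by simp_all
  then have w: "gp_word M w" using compat.hyps gp_cong_word_iff by blast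
  have "trace_eq (rmul_word ?q u) (rmul_word ?q w)" using compat.IH q uy by blast
  then have "trace_eq (rmul_word (rmul_word ?q u) y) (rmul_word (rmul_word ?q w) y)"
    using rmul_word_trace_eq reduced_rmul_word q uy w by blast
  then show ?case by simp
next
  case (mult a v b)
  then show ?case using rmul_mult by simp
next
  case (one v)
  then show ?case using rmul_one by simp
next
  case (comm u v a b)
  then show ?case using rmul_comm by simp
qed

theorem gp_cong_iff_trace_eq_normal_form:
  assumes "gp_word M x" "gp_word M y"
  shows "gc x y \<longleftrightarrow> trace_eq (rmul_word [] x) (rmul_word [] y)"
proof
  assume "gc x y"
  then show "trace_eq (rmul_word [] x) (rmul_word [] y)"
    using gp_cong_imp_trace_eq_rmul_word assms by simp
next
  assume "trace_eq (rmul_word [] x) (rmul_word [] y)"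
  moreover have "reduced (rmul_word [] x)" "reduced (rmul_word [] y)"
    using reduced_rmul_word assms by simp_all
  ultimately have "gc (rmul_word [] x) (rmul_word [] y)"
    using trace_eq_imp_gp_cong unfolding reduced_def by blast
  moreover have "gc x (rmul_word [] x)" "gc y (rmul_word [] y)"
    using gp_cong_rmul_word[of "[]"] assms by simp_all
  ultimately show "gc x y" using gp_cong.trans gp_cong.sym by metis
qed

lemma gp_cong_right_cancel_letter:
  assumes "right_cancellative (M v)" "gp_word M x" "gp_word M y" "m \<in> carrier (M v)"
    and "gc (x @ [(v, m)]) (y @ [(v, m)])"
  shows "gc x y"
proof -
  have red: "reduced (rmul_word [] x)" "reduced (rmul_word [] y)"
    using reduced_rmul_word assms by simp_all
  have "gp_word M (x @ [(v, m)])" "gp_word M (y @ [(v, m)])" using assms by simp_all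
  then have "trace_eq (rmul_word [] (x @ [(v, m)])) (rmul_word [] (y @ [(v, m)]))"
    using gp_cong_iff_trace_eq_normal_form assms(5) by blast
  then have "trace_eq (rmul (rmul_word [] x) (v, m)) (rmul (rmul_word [] y) (v, m))" by simp
  then have "trace_eq (rmul_word [] x) (rmul_word [] y)"
    by (rule rmul_right_cancel[OF assms(1) red assms(4)])
  then show ?thesis using gp_cong_iff_trace_eq_normal_form[OF assms(2,3)] by blast
qed

lemma gp_cong_right_cancel:
  assumes "\<forall>v. right_cancellative (M v)" "gp_word M x" "gp_word M y"
  shows "gp_word M c \<Longrightarrow> gc (x @ c) (y @ c) \<Longrightarrow> gc x y"
proof (induction c rule: rev_induct)
  case (snoc l c)
  obtain v m where l: "l = (v, m)" by (cases l)
  have "gc ((x @ c) @ [(v, m)]) ((y @ c) @ [(v, m)])" using snoc.prems l by simp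
  moreover have "gp_word M (x @ c)" "gp_word M (y @ c)" "m \<in> carrier (M v)"
    using assms snoc.prems l by auto
  ultimately have "gc (x @ c) (y @ c)" using gp_cong_right_cancel_letter assms(1) by blast
  then show ?case using snoc by simp
qed simp

lemma right_cancellative_graph_product:
  assumes "\<forall>v. right_cancellative (M v)"
  shows "right_cancellative (graph_product E M)"
  using gp_cong_right_cancel[OF assms] by (rule right_cancellative_graph_productI)

end

section \<open>Left cancellation by reversal\<close>

definition opposite_monoid :: "('a, 'b) monoid_scheme \<Rightarrow> ('a, 'b) monoid_scheme" where
  "opposite_monoid G = G\<lparr>mult := \<lambda>a b. b \<otimes>\<^bsub>G\<^esub> a\<rparr>"

lemma opposite_monoid_simps [simp]:
  "carrier (opposite_monoid G) = carrier G"
  "one (opposite_monoid G) = one G"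
  "mult (opposite_monoid G) a b = mult G b a"
  unfolding opposite_monoid_def by simp_all

lemma opposite_opposite_monoid [simp]: "opposite_monoid (opposite_monoid G) = G"
  unfolding opposite_monoid_def by simp

lemma monoid_opposite_monoid: "monoid G \<Longrightarrow> monoid (opposite_monoid G)"
  by (intro monoidI)
    (simp_all add: monoid.m_closed monoid.m_assoc monoid.one_closed monoid.l_one monoid.r_one)

lemma right_cancellative_opposite_monoid_iff:
  "right_cancellative (opposite_monoid G) \<longleftrightarrow> left_cancellative G"
  unfolding right_cancellative_def left_cancellative_def by simp

lemma gp_word_opposite_monoid [simp]: "gp_word (\<lambda>v. opposite_monoid (M v)) w \<longleftrightarrow> gp_word M w"
  unfolding gp_word_def by simp

lemma gp_cong_rev_opposite_monoid:
  assumes "\<And>u v. E u v \<Longrightarrow> E v u"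
  shows "gp_cong E M u w \<Longrightarrow> gp_cong E (\<lambda>v. opposite_monoid (M v)) (rev u) (rev w)"
proof (induction rule: gp_cong.induct)
  case (refl w)
  show ?case by (rule gp_cong.refl)
next
  case (sym u w)
  from sym.IH show ?case by (rule gp_cong.sym)
next
  case (trans u w z)
  from trans.IH show ?case by (rule gp_cong.trans)
next
  case (compat u w x y)
  then show ?case using gp_cong.compat by fastforce
next
  case (mult a v b)
  have "gp_cong E (\<lambda>v. opposite_monoid (M v)) [(v, b), (v, a)]
      [(v, b \<otimes>\<^bsub>opposite_monoid (M v)\<^esub> a)]"
    by (rule gp_cong.mult) (use mult in simp_all)
  then show ?case by simp
next
  case (one v)
  have "gp_cong E (\<lambda>v. opposite_monoid (M v)) [(v, \<one>\<^bsub>opposite_monoid (M v)\<^esub>)] []"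
    by (rule gp_cong.one)
  then show ?case by simp
next
  case (comm u v a b)
  have "gp_cong E (\<lambda>v. opposite_monoid (M v)) [(v, b), (u, a)] [(u, a), (v, b)]"
    by (rule gp_cong.comm) (use comm assms in simp_all)
  then show ?case by simp
qed

lemma (in graph_of_monoids) left_cancellative_graph_product:
  assumes "\<forall>v. left_cancellative (M v)"
  shows "left_cancellative (graph_product E M)"
proof (rule left_cancellative_graph_productI)
  let ?M' = "\<lambda>v. opposite_monoid (M v)"
  interpret opp: graph_of_monoids E ?M'
    by (rule graph_of_monoids.intro[OF irrefl symm monoid_opposite_monoid[OF mon]])
  have rc: "\<forall>v. right_cancellative (?M' v)"
    using assms by (simp add: right_cancellative_opposite_monoid_iff)
  fix x y c assume w: "gp_word M x" "gp_word M y" "gp_word M c" and cong: "gc (c @ x) (c @ y)"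
  have "gp_cong E ?M' (rev (c @ x)) (rev (c @ y))"
    using gp_cong_rev_opposite_monoid[of E M, OF symm cong] .
  then have "gp_cong E ?M' (rev x @ rev c) (rev y @ rev c)" by simp
  then have "gp_cong E ?M' (rev x) (rev y)"
    using opp.gp_cong_right_cancel[OF rc, of "rev x" "rev y" "rev c"] w by simp
  then have "gp_cong E (\<lambda>v. opposite_monoid (?M' v)) (rev (rev x)) (rev (rev y))"
    using gp_cong_rev_opposite_monoid[of E ?M', OF symm] by blast
  then show "gc x y" by simp
qed

theorem theorem1p5:
  fixes E :: "'v \<Rightarrow> 'v \<Rightarrow> bool" and M :: "'v \<Rightarrow> ('a, 'b) monoid_scheme"
  assumes irrefl: "\<And>v. \<not> E v v"
    and symm: "\<And>u v. E u v \<Longrightarrow> E v u"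
    and mon: "\<And>v. monoid (M v)"
  shows "((\<forall>v. right_cancellative (M v)) \<longrightarrow> right_cancellative (graph_product E M))
       \<and> ((\<forall>v. left_cancellative (M v)) \<longrightarrow> left_cancellative (graph_product E M))
       \<and> ((\<forall>v. cancellative (M v)) \<longrightarrow> cancellative (graph_product E M))"
proof -
  interpret graph_of_monoids E M by (rule graph_of_monoids.intro[OF irrefl symm mon])
  show ?thesis
    using right_cancellative_graph_product left_cancellative_graph_product
    unfolding cancellative_def by blast
qed

end
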